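(* Let $(G=(V,E),(p_e))$ be an IC model instance, $S\subseteq V$ with $S\neq V$, $\phi$ a realization, and $t\in\mathbb{Z}^+$. Let $\mathcal R$ be an RR-set generated with input $S,\phi,t$. Then for every $V^*\subseteq V$, \[(|V|-|S|)\cdot\mathbb{E}[\mathbb{I}(V^*\cap\mathcal R)]=\Delta f_t(S,V^*,\phi),\] where $\mathbb{I}(V^*\cap\mathcal R)=1$ if $V^*\cap\mathcal R\neq\emptyset$ and $0$ otherwise.
   Context: IC model: directed graph $G=(V,E)$, each edge $e$ independently live with probability $p_e\in(0,1]$. A realization is a pair $\phi=(L(\phi),D(\phi))$ of disjoint edge sets (known live, known dead edges); it is full if $L(\phi)\cup D(\phi)=E$; $\Psi$ is the set of full realizations. $\phi\prec\psi$ means $L(\phi)\subseteq L(\psi)$, $D(\phi)\subseteq D(\psi)$, and $\Pr[\psi\mid\phi]=\prod_{e\in L(\psi)\setminus L(\phi)}p_e\prod_{e\in D(\psi)\setminus D(\phi)}(1-p_e)$. For $S\subseteq V$ and full $\psi$, $A_t(S,\psi)$ is the set of nodes reachable from some node of $S$ via a path of at most $t$ edges all in $L(\psi)$. $\Delta_t(S,V^*,\psi)=|A_t(S\cup V^*,\psi)|-|A_t(S,\psi)|$ and $\Delta f_t(S,V^*,\phi)=\sum_{\psi\in\Psi,\phi\prec\psi}\Pr[\psi\mid\phi]\Delta_t(S,V^*,\psi)$. RR-set with input $S,\phi,t$: (1) for each edge not in $L(\phi)\cup D(\phi)$ sample its state independently (live w.p. $p_e$), keeping the states given by $\phi$ for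 the others, obtaining a full realization $\psi^*$; (2) choose a node $v\notin S$ uniformly at random and let $R_v$ be the set of nodes from which $v$ is reachable via a path of at most $t$ edges all live in $\psi^*$ (including $v$ itself); return $\mathcal R=R_v$ if $R_v\cap S=\emptyset$, and $\mathcal R=\emptyset$ otherwise. *)

theory Defs
  imports "HOL-Probability.Probability"
begin

text \<open>IC model on a directed graph with vertex set V and edge set E (pairs of vertices).
A realization is a pair (L, D) of disjoint edge sets (known live / known dead).\<close>

definition realization :: "('a \<times> 'a) set \<Rightarrow> ('a \<times> 'a) set \<times> ('a \<times> 'a) set \<Rightarrow> bool" where
  "realization E phi \<longleftrightarrow> fst phi \<subseteq> E \<and> snd phi \<subseteq> E \<and> fst phi \<inter> snd phi = {}"

definition full_realizations :: "('a \<times> 'a) set \<Rightarrow> (('a \<times> 'a) set \<times> ('a \<times> 'a) set) set" where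
  "full_realizations E = {psi. realization E psi \<and> fst psi \<union> snd psi = E}"

definition prec :: "('a \<times> 'a) set \<times> ('a \<times> 'a) set \<Rightarrow> ('a \<times> 'a) set \<times> ('a \<times> 'a) set \<Rightarrow> bool" where
  "prec phi psi \<longleftrightarrow> fst phi \<subseteq> fst psi \<and> snd phi \<subseteq> snd psi"

definition cond_prob :: "('a \<times> 'a \<Rightarrow> real) \<Rightarrow> ('a \<times> 'a) set \<times> ('a \<times> 'a) set
    \<Rightarrow> ('a \<times> 'a) set \<times> ('a \<times> 'a) set \<Rightarrow> real" where
  "cond_prob p psi phi =
     (\<Prod>e\<in>fst psi - fst phi. p e) * (\<Prod>e\<in>snd psi - snd phi. 1 - p e)"

fun live_walk :: "('a \<times> 'a) set \<Rightarrow> nat \<Rightarrow> 'a \<Rightarrow> 'a \<Rightarrow> bool" where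
  "live_walk L 0 u v \<longleftrightarrow> u = v"
| "live_walk L (Suc k) u v \<longleftrightarrow> (\<exists>w. (u, w) \<in> L \<and> live_walk L k w v)"

definition activated :: "nat \<Rightarrow> 'a set \<Rightarrow> ('a \<times> 'a) set \<times> ('a \<times> 'a) set \<Rightarrow> 'a set" where
  "activated t S psi = {v. \<exists>u\<in>S. \<exists>k\<le>t. live_walk (fst psi) k u v}"

definition marginal :: "nat \<Rightarrow> 'a set \<Rightarrow> 'a set \<Rightarrow> ('a \<times> 'a) set \<times> ('a \<times> 'a) set \<Rightarrow> real" where
  "marginal t S V' psi = real (card (activated t (S \<union> V') psi)) - real (card (activated t S psi))"

definition exp_marginal :: "('a \<times> 'a) set \<Rightarrow> ('a \<times> 'a \<Rightarrow> real) \<Rightarrow> nat \<Rightarrow> 'a set \<Rightarrow> 'a set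
    \<Rightarrow> ('a \<times> 'a) set \<times> ('a \<times> 'a) set \<Rightarrow> real" where
  "exp_marginal E p t S V' phi =
     (\<Sum>psi\<in>{psi\<in>full_realizations E. prec phi psi}. cond_prob p psi phi * marginal t S V' psi)"

definition rr_set :: "'a set \<Rightarrow> ('a \<times> 'a) set \<Rightarrow> ('a \<times> 'a \<Rightarrow> real) \<Rightarrow> 'a set
    \<Rightarrow> ('a \<times> 'a) set \<times> ('a \<times> 'a) set \<Rightarrow> nat \<Rightarrow> 'a set pmf" where
  "rr_set V E p S phi t =
     bind_pmf (Pi_pmf (E - (fst phi \<union> snd phi)) False (\<lambda>e. bernoulli_pmf (p e))) (\<lambda>f.
     bind_pmf (pmf_of_set (V - S)) (\<lambda>v.
       let Lpsi = fst phi \<union> {e \<in> E - (fst phi \<union> snd phi). f e};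
           R = {u. \<exists>k\<le>t. live_walk Lpsi k u v}
       in return_pmf (if R \<inter> S = {} then R else {})))"

end

theory Submission
  imports Defs
begin

text \<open>
  Fix the sampled completion \<open>\<psi>\<close> of \<open>\<phi>\<close>. A node \<open>v \<notin> S\<close> lies in
  \<open>A\<^sub>t(S \<union> V\<^sup>*, \<psi>) - A\<^sub>t(S, \<psi>)\<close> exactly when its reverse-reachable set \<open>R\<^sub>v\<close> avoids \<open>S\<close>
  and meets \<open>V\<^sup>*\<close>, i.e. exactly when the RR-set rooted at \<open>v\<close> meets \<open>V\<^sup>*\<close>. Averaging over the
  uniform root, \<open>(|V| - |S|)\<close> times the conditional expectation of the indicator is
  \<open>\<Delta>\<^sub>t(S, V\<^sup>*, \<psi>)\<close>. The coin flips on the unknown edges are in bijection with the full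
  realizations extending \<open>\<phi>\<close>, the probability of a coin outcome being \<open>Pr[\<psi> | \<phi>]\<close>,
  so averaging over \<open>\<psi>\<close> gives \<open>\<Delta>f\<^sub>t(S, V\<^sup>*, \<phi>)\<close>.
\<close>

definition reverse_reach :: "('a \<times> 'a) set \<Rightarrow> nat \<Rightarrow> 'a \<Rightarrow> 'a set" where
  "reverse_reach L t v = {u. \<exists>k\<le>t. live_walk L k u v}"

definition unknown_edges :: "('a \<times> 'a) set \<Rightarrow> ('a \<times> 'a) set \<times> ('a \<times> 'a) set \<Rightarrow> ('a \<times> 'a) set" where
  "unknown_edges E phi = E - (fst phi \<union> snd phi)"

definition completion :: "('a \<times> 'a) set \<Rightarrow> ('a \<times> 'a) set \<times> ('a \<times> 'a) set
    \<Rightarrow> ('a \<times> 'a \<Rightarrow> bool) \<Rightarrow> ('a \<times> 'a) set \<times> ('a \<times> 'a) set" where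
  "completion E phi f =
     (fst phi \<union> {e \<in> unknown_edges E phi. f e}, snd phi \<union> {e \<in> unknown_edges E phi. \<not> f e})"

definition rr_from_root :: "('a \<times> 'a) set \<Rightarrow> nat \<Rightarrow> 'a set \<Rightarrow> 'a \<Rightarrow> 'a set" where
  "rr_from_root L t S v = (let R = reverse_reach L t v in if R \<inter> S = {} then R else {})"

definition rr_indicator :: "'a set \<Rightarrow> 'a set \<Rightarrow> real" where
  "rr_indicator V' R = (if V' \<inter> R \<noteq> {} then 1 else 0)"

lemma live_walk_closed:
  assumes "L \<subseteq> V \<times> V" "live_walk L k u v" "u \<in> V"
  shows "v \<in> V"
  using assms(2,3)
proof (induction k arbitrary: u)
  case (Suc k)
  then obtain w where "(u, w) \<in> L" "live_walk L k w v" by auto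
  with Suc.IH assms(1) show ?case by blast
qed simp

lemma self_mem_reverse_reach: "v \<in> reverse_reach L t v"
  unfolding reverse_reach_def by (auto intro: exI[of _ 0])

lemma mem_activated_iff: "v \<in> activated t S psi \<longleftrightarrow> reverse_reach (fst psi) t v \<inter> S \<noteq> {}"
  unfolding activated_def reverse_reach_def by blast

lemma activated_subset:
  assumes "fst psi \<subseteq> V \<times> V" "S \<subseteq> V"
  shows "activated t S psi \<subseteq> V"
  using live_walk_closed[OF assms(1)] assms(2) unfolding activated_def by blast

lemma marginal_eq_card:
  assumes "finite V" "fst psi \<subseteq> V \<times> V" "S \<subseteq> V" "V' \<subseteq> V"
  shows "marginal t S V' psi = real (card {v \<in> V - S.
           reverse_reach (fst psi) t v \<inter> S = {} \<and> V' \<inter> reverse_reach (fst psi) t v \<noteq> {}})"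
proof -
  let ?A = "activated t S psi" and ?A' = "activated t (S \<union> V') psi"
  have "?A \<subseteq> ?A'" unfolding activated_def by auto
  moreover have "finite ?A'"
    using activated_subset[OF assms(2)] assms finite_subset by (metis Un_subset_iff)
  moreover have "?A' - ?A = {v \<in> V - S.
      reverse_reach (fst psi) t v \<inter> S = {} \<and> V' \<inter> reverse_reach (fst psi) t v \<noteq> {}}"
    using activated_subset[OF assms(2), of "S \<union> V'"] assms(3,4) self_mem_reverse_reach[of _ "fst psi" t]
    by (auto simp: mem_activated_iff disjoint_iff)
  ultimately show ?thesis
    unfolding marginal_def by (metis card_Diff_subset card_mono finite_subset of_nat_diff)
qed

lemma rr_set_eq:
  "rr_set V E p S phi t =
     Pi_pmf (unknown_edges E phi) False (\<lambda>e. bernoulli_pmf (p e)) \<bind> (\<lambda>f.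
       map_pmf (rr_from_root (fst (completion E phi f)) t S) (pmf_of_set (V - S)))"
  unfolding rr_set_def map_pmf_def rr_from_root_def completion_def unknown_edges_def reverse_reach_def
    Let_def fst_conv
  by (rule refl)

lemma expectation_rr_set:
  assumes "finite E" "finite V" "S \<subset> V"
  shows "measure_pmf.expectation (rr_set V E p S phi t) g =
           (\<Sum>f\<in>PiE_dflt (unknown_edges E phi) False (\<lambda>_. UNIV).
              pmf (Pi_pmf (unknown_edges E phi) False (\<lambda>e. bernoulli_pmf (p e))) f *
              measure_pmf.expectation (map_pmf (rr_from_root (fst (completion E phi f)) t S)
                (pmf_of_set (V - S))) g)"
  unfolding rr_set_eq
proof (subst pmf_expectation_bind[of "PiE_dflt (unknown_edges E phi) False (\<lambda>_. UNIV)"])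
  have fin: "finite (unknown_edges E phi)" using assms(1) unfolding unknown_edges_def by simp
  then show "finite (PiE_dflt (unknown_edges E phi) False (\<lambda>_. UNIV))"
    by (simp add: finite_PiE_dflt)
  show "set_pmf (Pi_pmf (unknown_edges E phi) False (\<lambda>e. bernoulli_pmf (p e)))
          \<subseteq> PiE_dflt (unknown_edges E phi) False (\<lambda>_. UNIV)"
    using set_Pi_pmf_subset[OF fin, of False] by (force simp: PiE_dflt_def)
  show "finite (set_pmf (map_pmf (rr_from_root L t S) (pmf_of_set (V - S))))" for L
    using assms(2,3) by auto
qed simp

lemma expectation_rr_from_root_eq_marginal:
  assumes "finite V" "fst psi \<subseteq> V \<times> V" "S \<subseteq> V" "S \<noteq> V" "V' \<subseteq> V"
  shows "real (card (V - S)) *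
           measure_pmf.expectation (map_pmf (rr_from_root (fst psi) t S) (pmf_of_set (V - S))) (rr_indicator V')
         = marginal t S V' psi"
proof -
  let ?R = "reverse_reach (fst psi) t"
  have ne: "V - S \<noteq> {}" "finite (V - S)" using assms(1,3,4) by auto
  have "measure_pmf.expectation (map_pmf (rr_from_root (fst psi) t S) (pmf_of_set (V - S))) (rr_indicator V')
        = (\<Sum>v\<in>V - S. if ?R v \<inter> S = {} \<and> V' \<inter> ?R v \<noteq> {} then 1 else 0) / real (card (V - S))"
    using ne unfolding rr_indicator_def rr_from_root_def
    by (simp add: integral_pmf_of_set Let_def) (rule sum.cong[OF refl]; auto)
  also have "\<dots> = real (card {v \<in> V - S. ?R v \<inter> S = {} \<and> V' \<inter> ?R v \<noteq> {}}) / real (card (V - S))"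
    unfolding sum.inter_filter[OF ne(2), symmetric] by simp
  finally show ?thesis
    using ne marginal_eq_card[OF assms(1,2,3,5)] by simp
qed

lemma completion_live_subset:
  assumes "realization E phi"
  shows "fst (completion E phi f) \<subseteq> E"
  using assms unfolding completion_def unknown_edges_def realization_def by auto

lemma bij_betw_completion:
  assumes "realization E phi"
  shows "bij_betw (completion E phi) (PiE_dflt (unknown_edges E phi) False (\<lambda>_. UNIV))
           {psi \<in> full_realizations E. prec phi psi}"
proof (rule bij_betw_byWitness[where f' = "\<lambda>psi e. e \<in> unknown_edges E phi \<and> e \<in> fst psi"])
  show "\<forall>f\<in>PiE_dflt (unknown_edges E phi) False (\<lambda>_. UNIV).
          (\<lambda>e. e \<in> unknown_edges E phi \<and> e \<in> fst (completion E phi f)) = f"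
    unfolding PiE_dflt_def completion_def unknown_edges_def by (auto simp: fun_eq_iff)
  show "\<forall>psi\<in>{psi \<in> full_realizations E. prec phi psi}.
          completion E phi (\<lambda>e. e \<in> unknown_edges E phi \<and> e \<in> fst psi) = psi"
    unfolding completion_def unknown_edges_def full_realizations_def realization_def prec_def
    by (auto simp: prod_eq_iff)
  show "completion E phi ` PiE_dflt (unknown_edges E phi) False (\<lambda>_. UNIV)
          \<subseteq> {psi \<in> full_realizations E. prec phi psi}"
    using assms unfolding completion_def unknown_edges_def full_realizations_def realization_def prec_def
    by auto
  show "(\<lambda>psi e. e \<in> unknown_edges E phi \<and> e \<in> fst psi) ` {psi \<in> full_realizations E. prec phi psi}
          \<subseteq> PiE_dflt (unknown_edges E phi) False (\<lambda>_. UNIV)"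
    unfolding PiE_dflt_def by auto
qed

lemma pmf_Pi_bernoulli_eq_cond_prob:
  assumes "finite E" "\<And>e. e \<in> E \<Longrightarrow> 0 \<le> p e \<and> p e \<le> 1"
    and f: "f \<in> PiE_dflt (unknown_edges E phi) False (\<lambda>_. UNIV)"
  shows "pmf (Pi_pmf (unknown_edges E phi) False (\<lambda>e. bernoulli_pmf (p e))) f
         = cond_prob p (completion E phi f) phi"
proof -
  let ?U = "unknown_edges E phi"
  have fin: "finite ?U" using assms(1) unfolding unknown_edges_def by simp
  have "pmf (bernoulli_pmf (p e)) (f e) = (if f e then p e else 1 - p e)" if "e \<in> ?U" for e
    using assms(2)[of e] that unfolding unknown_edges_def by (cases "f e") auto
  then have "pmf (Pi_pmf ?U False (\<lambda>e. bernoulli_pmf (p e))) f = (\<Prod>e\<in>?U. if f e then p e else 1 - p e)"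
    using fin f by (subst pmf_Pi') (auto simp: PiE_dflt_def)
  also have "\<dots> = (\<Prod>e\<in>{e \<in> ?U. f e}. p e) * (\<Prod>e\<in>{e \<in> ?U. \<not> f e}. 1 - p e)"
    by (subst prod.If_cases[OF fin]) (simp add: Int_def)
  also have "\<dots> = cond_prob p (completion E phi f) phi"
    unfolding cond_prob_def completion_def unknown_edges_def
    by (auto intro!: arg_cong2[where f = "(*)"] prod.cong)
  finally show ?thesis .
qed

theorem lemma5:
  fixes V :: "'a set" and E :: "('a \<times> 'a) set" and p :: "'a \<times> 'a \<Rightarrow> real"
    and S V' :: "'a set" and phi :: "('a \<times> 'a) set \<times> ('a \<times> 'a) set" and t :: nat
  assumes "finite V" and "E \<subseteq> V \<times> V"
    and "\<And>e. e \<in> E \<Longrightarrow> 0 < p e \<and> p e \<le> 1"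
    and "S \<subseteq> V" and "S \<noteq> V"
    and "realization E phi"
    and "t \<ge> 1"
    and "V' \<subseteq> V"
  shows "real (card V - card S) *
           measure_pmf.expectation (rr_set V E p S phi t) (\<lambda>R. if V' \<inter> R \<noteq> {} then 1 else 0)
         = exp_marginal E p t S V' phi"
proof -
  let ?F = "PiE_dflt (unknown_edges E phi) False (\<lambda>_. UNIV)"
    and ?P = "Pi_pmf (unknown_edges E phi) False (\<lambda>e. bernoulli_pmf (p e))"
    and ?psi = "completion E phi"
  have finE: "finite E" using assms(1,2) finite_subset by blast
  have psi_V: "fst (?psi f) \<subseteq> V \<times> V" for f
    using completion_live_subset[OF assms(6)] assms(2) by blast
  have "real (card V - card S) * measure_pmf.expectation (rr_set V E p S phi t) (rr_indicator V')
        = (\<Sum>f\<in>?F. pmf ?P f * (real (card (V - S)) *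
             measure_pmf.expectation (map_pmf (rr_from_root (fst (?psi f)) t S) (pmf_of_set (V - S)))
               (rr_indicator V')))"
    using assms(1,4,5) finE
    by (simp add: expectation_rr_set card_Diff_subset finite_subset sum_distrib_left mult.left_commute)
  also have "\<dots> = (\<Sum>f\<in>?F. pmf ?P f * marginal t S V' (?psi f))"
    using expectation_rr_from_root_eq_marginal[OF assms(1) psi_V assms(4,5,8)] by simp
  also have "\<dots> = (\<Sum>f\<in>?F. cond_prob p (?psi f) phi * marginal t S V' (?psi f))"
    using pmf_Pi_bernoulli_eq_cond_prob[OF finE] assms(3) by (simp add: less_imp_le)
  also have "\<dots> = exp_marginal E p t S V' phi"
    unfolding exp_marginal_def by (rule sum.reindex_bij_betw[OF bij_betw_completion[OF assms(6)]])
  finally show ?thesis unfolding rr_indicator_def .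
qed

end
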